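(* Let $m\ge 1$, let $\lambda_1,\ldots,\lambda_m\in\mathbb R$ be constants, and let $S_1,\ldots,S_m:\mathbb R^m\to\mathbb R$ be smooth functions. Let $Q_{1,0},\ldots,Q_{m,0}:\mathbb R\to\mathbb R$ be smooth initial data and let $Q_\ell:\mathbb R^+_0\times\mathbb R\to\mathbb R$, $\ell=1,\ldots,m$, be the smooth solution of $$(\partial_t+\lambda_\ell\partial_x)Q_\ell=S_\ell(Q_1,\ldots,Q_m),\qquad Q_\ell(0,x)=Q_{\ell,0}(x),\qquad \ell=1,\ldots,m.$$ Fix $\alpha\in(0,1)$. For $t\ge 0$, $x\in\mathbb R$ and $k,\ell=1,\ldots,m$ define $$\xi_{\ell k}:=x-\lambda_\ell t(1-\alpha)-\lambda_k\alpha t,\qquad Q^*_{k\ell}:=Q_{k,0}(\xi_{\ell k})+\alpha t\,S_k\big(Q_{1,0}(\xi_{\ell k}),\ldots,Q_{m,0}(\xi_{\ell k})\big),$$ and $$Q^{(1)}_\ell(t,x):=Q_{\ell,0}(x-\lambda_\ell t)+\Big(1-\frac{1}{2\alpha}\Big)t\,S_\ell\big(Q_{1,0}(x-\lambda_\ell t),\ldots,Q_{m,0}(x-\lambda_\ell t)\big)+\frac{t}{2\alpha}S_\ell\big(Q^*_{1\ell},\ldots,Q^*_{m\ell}\big).$$ Then for every fixed $x$ and every $\ell=1,\ldots,m$, $Q^{(1)}_\ell(t,x)=Q_\ell(t,x)+\mathcal O(t^3)$ as $t\to0$.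
   Context: This is an approximate ("RK2") evolution operator for a linear hyperbolic system written in characteristic variables $Q_\ell$ with constant characteristic speeds $\lambda_\ell$ and a possibly nonlinear source $S$. *)

theory Defs
  imports "HOL-Analysis.Analysis" "HOL-Library.Landau_Symbols"
begin

text \<open>C-infinity smoothness on a set U (derivatives taken within U, so closed
half-planes are allowed): f is (Frechet) differentiable within U at every point
of U, and every first-order partial derivative is again smooth on U.
This coinductive definition yields existence of all iterated partial
derivatives of every order (hence their continuity).\<close>
coinductive smooth_on :: "'a::euclidean_space set \<Rightarrow> ('a \<Rightarrow> real) \<Rightarrow> bool" where
  "(\<forall>x\<in>U. f differentiable (at x within U)) \<Longrightarrow>
   (\<forall>b\<in>Basis. smooth_on U (\<lambda>x. frechet_derivative f (at x within U) b)) \<Longrightarrow>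
   smooth_on U f"

text \<open>The half-plane t \<ge> 0, points written (t, x).\<close>
definition halfplane :: "(real \<times> real) set" where
  "halfplane = {0..} \<times> UNIV"

definition is_smooth_solution ::
  "('m::finite \<Rightarrow> real) \<Rightarrow> ('m \<Rightarrow> real^'m \<Rightarrow> real) \<Rightarrow> ('m \<Rightarrow> real \<Rightarrow> real)
   \<Rightarrow> ('m \<Rightarrow> real \<Rightarrow> real \<Rightarrow> real) \<Rightarrow> bool" where
  "is_smooth_solution lam S Q0 Q \<longleftrightarrow>
     (\<forall>l. smooth_on halfplane (\<lambda>p. Q l (fst p) (snd p))) \<and>
     (\<forall>l x. Q l 0 x = Q0 l x) \<and>
     (\<forall>l t x. t \<ge> 0 \<longrightarrow>
        frechet_derivative (\<lambda>p. Q l (fst p) (snd p)) (at (t, x) within halfplane) (1, 0)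
        + lam l * frechet_derivative (\<lambda>p. Q l (fst p) (snd p)) (at (t, x) within halfplane) (0, 1)
        = S l (\<chi> k. Q k t x))"

definition xi :: "('m::finite \<Rightarrow> real) \<Rightarrow> real \<Rightarrow> 'm \<Rightarrow> 'm \<Rightarrow> real \<Rightarrow> real \<Rightarrow> real" where
  "xi lam \<alpha> l k t x = x - lam l * t * (1 - \<alpha>) - lam k * \<alpha> * t"

definition Qstar ::
  "('m::finite \<Rightarrow> real) \<Rightarrow> ('m \<Rightarrow> real^'m \<Rightarrow> real) \<Rightarrow> ('m \<Rightarrow> real \<Rightarrow> real) \<Rightarrow> real
   \<Rightarrow> 'm \<Rightarrow> 'm \<Rightarrow> real \<Rightarrow> real \<Rightarrow> real" where
  "Qstar lam S Q0 \<alpha> k l t x =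
     (let \<xi> = xi lam \<alpha> l k t x in Q0 k \<xi> + \<alpha> * t * S k (\<chi> j. Q0 j \<xi>))"

definition Q1 ::
  "('m::finite \<Rightarrow> real) \<Rightarrow> ('m \<Rightarrow> real^'m \<Rightarrow> real) \<Rightarrow> ('m \<Rightarrow> real \<Rightarrow> real) \<Rightarrow> real
   \<Rightarrow> 'm \<Rightarrow> real \<Rightarrow> real \<Rightarrow> real" where
  "Q1 lam S Q0 \<alpha> l t x =
     Q0 l (x - lam l * t)
     + (1 - 1 / (2 * \<alpha>)) * t * S l (\<chi> j. Q0 j (x - lam l * t))
     + t / (2 * \<alpha>) * S l (\<chi> k. Qstar lam S Q0 \<alpha> k l t x)"

end

theory Submission
  imports Defs
begin

text \<open>
  Write \<open>y = x - \<lambda>\<^sub>l t\<close>. Along the \<open>l\<close>-th characteristic the equation gives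
  \<open>d/ds Q\<^sub>l(s, y + \<lambda>\<^sub>l s) = S\<^sub>l(Q)\<close>, and at \<open>s = 0\<close> the second derivative is
  \<open>B(y) = \<nabla>S\<^sub>l(Q\<^sub>0(y)) \<cdot> (S\<^sub>k(Q\<^sub>0(y)) + (\<lambda>\<^sub>l - \<lambda>\<^sub>k) \<partial>\<^sub>x Q\<^sub>k(0, y))\<^sub>k\<close>. Hence
  \<open>Q\<^sub>l(t, x) = Q\<^sub>l(0, y) + t S\<^sub>l(Q\<^sub>0(y)) + t\<^sup>2/2 B(y) + O(t\<^sup>3)\<close> by Taylor's theorem. The
  predictor value \<open>S\<^sub>l(Q\<^sup>*\<^sub>1\<^sub>l, \<dots>, Q\<^sup>*\<^sub>m\<^sub>l)\<close> is a smooth function of \<open>(\<alpha>t, y)\<close> whose expansion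
  in \<open>\<alpha>t\<close> is \<open>S\<^sub>l(Q\<^sub>0(y)) + \<alpha>t B(y) + O(t\<^sup>2)\<close>, with the same \<open>B\<close>. Substituted into
  \<open>Q1\<close>, all terms up to order \<open>t\<^sup>2\<close> cancel, for every \<open>\<alpha> > 0\<close>. The Taylor remainders
  are uniform because \<open>y\<close> stays in a compact interval as \<open>t \<rightarrow> 0\<close>.
\<close>

section \<open>Smooth functions and the chain rule\<close>

lemma smooth_onD:
  assumes "smooth_on U f"
  shows "\<forall>x\<in>U. f differentiable (at x within U)"
    and "\<forall>b\<in>Basis. smooth_on U (\<lambda>x. frechet_derivative f (at x within U) b)"
  using assms by (auto elim: smooth_on.cases)

lemma smooth_on_differentiable: "smooth_on U f \<Longrightarrow> x \<in> U \<Longrightarrow> f differentiable (at x within U)"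
  using smooth_onD(1) by blast

lemma smooth_on_imp_continuous_on: "smooth_on U f \<Longrightarrow> continuous_on U f"
  by (meson continuous_on_eq_continuous_within differentiable_imp_continuous_within smooth_onD(1))

lemma smooth_on_UNIV_has_real_derivative:
  fixes h :: "real \<Rightarrow> real"
  assumes "smooth_on UNIV h"
  shows "(h has_real_derivative deriv h z) (at z)"
  using smooth_onD(1)[OF assms] DERIV_deriv_iff_real_differentiable by blast

lemma smooth_on_UNIV_deriv:
  fixes h :: "real \<Rightarrow> real"
  assumes "smooth_on UNIV h"
  shows "smooth_on UNIV (deriv h)"
proof -
  have "frechet_derivative h (at z) = (*) (deriv h z)" for z
    using smooth_on_UNIV_has_real_derivative[OF assms]
    by (metis frechet_derivative_at has_field_derivative_def)
  then have "deriv h = (\<lambda>z. frechet_derivative h (at z) 1)"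
    by simp
  then show ?thesis
    using smooth_onD(2)[OF assms] by simp
qed

definition partial_deriv :: "(real^'m \<Rightarrow> real) \<Rightarrow> 'm::finite \<Rightarrow> real^'m \<Rightarrow> real" where
  "partial_deriv H k z = frechet_derivative H (at z) (axis k 1)"

lemma smooth_on_UNIV_partial_deriv:
  "smooth_on UNIV (H :: real^'m::finite \<Rightarrow> real) \<Longrightarrow> smooth_on UNIV (partial_deriv H k)"
  using smooth_onD(2)[of UNIV H] by (auto simp: partial_deriv_def[abs_def])

lemma frechet_derivative_eq_sum_partial_deriv:
  fixes H :: "real^'m::finite \<Rightarrow> real"
  assumes "H differentiable (at z)"
  shows "frechet_derivative H (at z) w = (\<Sum>k\<in>UNIV. w $ k * partial_deriv H k z)"
proof -
  interpret bounded_linear "frechet_derivative H (at z)"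
    using assms frechet_derivative_works has_derivative_bounded_linear by blast
  have "frechet_derivative H (at z) w = frechet_derivative H (at z) (\<Sum>k\<in>UNIV. w $ k *\<^sub>R axis k 1)"
    using basis_expansion[of w] by (simp add: scalar_mult_eq_scaleR)
  also have "\<dots> = (\<Sum>k\<in>UNIV. w $ k * partial_deriv H k z)"
    by (simp add: sum scale partial_deriv_def)
  finally show ?thesis .
qed

lemma has_derivative_vec_lambda:
  fixes G :: "'m::finite \<Rightarrow> 'a::real_normed_vector \<Rightarrow> real"
  assumes "\<And>k. (G k has_derivative G' k) F"
  shows "((\<lambda>p. \<chi> k. G k p) has_derivative (\<lambda>v. \<chi> k. G' k v)) F"
proof -
  have "(\<lambda>p. \<chi> k. G k p) = (\<lambda>p. \<Sum>k\<in>UNIV. G k p *\<^sub>R (axis k 1 :: real^'m))"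
    and "(\<lambda>v. \<chi> k. G' k v) = (\<lambda>v. \<Sum>k\<in>UNIV. G' k v *\<^sub>R (axis k 1 :: real^'m))"
    by (auto simp: fun_eq_iff vec_eq_iff axis_def if_distrib sum.If_cases
        cong del: if_weak_cong)
  then show ?thesis
    by (simp only:) (intro has_derivative_sum has_derivative_scaleR_left assms)
qed

lemma has_derivative_compose_smooth:
  fixes h :: "real \<Rightarrow> real"
  assumes "smooth_on UNIV h" "(g has_derivative g') (at x within s)"
  shows "((\<lambda>x. h (g x)) has_derivative (\<lambda>v. g' v * deriv h (g x))) (at x within s)"
  using has_derivative_compose[OF assms(2) smooth_on_UNIV_has_real_derivative[OF assms(1),
        unfolded has_field_derivative_def]]
  by (simp add: mult.commute)

lemma has_derivative_compose_smooth_vec: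
  fixes H :: "real^'m::finite \<Rightarrow> real"
  assumes "smooth_on UNIV H" "\<And>k. (G k has_derivative G' k) (at x within s)"
  shows "((\<lambda>x. H (\<chi> k. G k x)) has_derivative
           (\<lambda>v. frechet_derivative H (at (\<chi> k. G k x)) (\<chi> k. G' k v))) (at x within s)"
proof -
  have "H differentiable (at (\<chi> k. G k x))"
    using smooth_onD(1)[OF assms(1)] by simp
  then show ?thesis
    using has_derivative_compose[OF has_derivative_vec_lambda[OF assms(2)]]
    by (simp add: frechet_derivative_works)
qed

section \<open>Derivatives within the half-plane\<close>

definition hp_deriv :: "(real \<times> real \<Rightarrow> real) \<Rightarrow> real \<times> real \<Rightarrow> real \<times> real \<Rightarrow> real" where
  "hp_deriv F v p = frechet_derivative F (at p within halfplane) v"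

lemma mem_halfplane: "p \<in> halfplane \<longleftrightarrow> 0 \<le> fst p"
  by (cases p) (auto simp: halfplane_def)

lemma hp_deriv_eq:
  assumes "p \<in> halfplane" "(F has_derivative F') (at p within halfplane)"
  shows "hp_deriv F v p = F' v"
proof -
  have "frechet_derivative F (at p within halfplane) = F'"
  proof (rule frechet_derivative_unique_within[OF _ assms(2)])
    show "(F has_derivative frechet_derivative F (at p within halfplane)) (at p within halfplane)"
      using assms(2) frechet_derivative_works by (auto simp: differentiable_def)
    fix i :: "real \<times> real" and e :: real
    assume "i \<in> Basis" "0 < e"
    then show "\<exists>d. 0 < \<bar>d\<bar> \<and> \<bar>d\<bar> < e \<and> p + d *\<^sub>R i \<in> halfplane"
      using assms(1) by (intro exI[of _ "e/2"]) (auto simp: mem_halfplane Basis_prod_def)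
  qed
  then show ?thesis
    by (simp add: hp_deriv_def)
qed

lemma has_derivative_hp_deriv:
  "F differentiable (at p within halfplane) \<Longrightarrow>
   (F has_derivative (\<lambda>v. hp_deriv F v p)) (at p within halfplane)"
  unfolding hp_deriv_def by (simp add: frechet_derivative_works)

lemma hp_deriv_linear:
  assumes "F differentiable (at p within halfplane)"
  shows "hp_deriv F v p = fst v * hp_deriv F (1, 0) p + snd v * hp_deriv F (0, 1) p"
proof -
  interpret linear "\<lambda>v. hp_deriv F v p"
    using has_derivative_hp_deriv[OF assms] by (auto dest: has_derivative_linear)
  have "v = fst v *\<^sub>R (1, 0) + snd v *\<^sub>R (0, 1)"
    by (cases v) simp
  then have "hp_deriv F v p = hp_deriv F (fst v *\<^sub>R (1, 0) + snd v *\<^sub>R (0, 1)) p"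
    by simp
  then show ?thesis
    by (simp only: add scale real_scaleR_def)
qed

lemma hp_deriv_cong:
  assumes "(F has_derivative F') (at p within halfplane)" "p \<in> halfplane"
    and "\<And>q. q \<in> halfplane \<Longrightarrow> F q = G q"
  shows "hp_deriv G v p = F' v"
  using assms
  by (intro hp_deriv_eq has_derivative_transform_within[OF assms(1) zero_less_one]) auto

section \<open>Smoothness of composite functions on the half-plane\<close>

text \<open>
  Smoothness is coinductive, so closure of \<^const>\<open>smooth_on\<close> under arithmetic and
  composition is proved by coinduction up to these operations: the closure below is
  stable under \<^const>\<open>hp_deriv\<close>, hence consists of smooth functions. The parameter \<open>T\<close>
  only fixes the index type of the vector-valued compositions.
\<close>

inductive smooth_closure :: "'m::finite itself \<Rightarrow> (real \<times> real \<Rightarrow> real) \<Rightarrow> bool" for T where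
  base: "smooth_on halfplane F \<Longrightarrow> smooth_closure T F"
| affine: "smooth_closure T (\<lambda>p. a * fst p + b * snd p + d)"
| add: "smooth_closure T F \<Longrightarrow> smooth_closure T G \<Longrightarrow> smooth_closure T (\<lambda>p. F p + G p)"
| mult: "smooth_closure T F \<Longrightarrow> smooth_closure T G \<Longrightarrow> smooth_closure T (\<lambda>p. F p * G p)"
| compose: "smooth_on UNIV h \<Longrightarrow> smooth_closure T F \<Longrightarrow> smooth_closure T (\<lambda>p. h (F p))"
| compose_vec: "smooth_on UNIV (H :: real^'m \<Rightarrow> real) \<Longrightarrow> (\<And>k. smooth_closure T (G k)) \<Longrightarrow>
    smooth_closure T (\<lambda>p. H (\<chi> k. G k p))"
| cong: "smooth_closure T F \<Longrightarrow> (\<And>p. p \<in> halfplane \<Longrightarrow> F p = G p) \<Longrightarrow> smooth_closure T G"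

lemma smooth_closure_const: "smooth_closure T (\<lambda>p. c)"
  by (rule smooth_closure.cong[OF smooth_closure.affine[of T 0 0 c]]) simp

lemma smooth_closure_sum:
  "(\<And>k. smooth_closure T (F k)) \<Longrightarrow> smooth_closure T (\<lambda>p. \<Sum>k\<in>A. F k p)"
  by (induction A rule: infinite_finite_induct) (auto intro: smooth_closure_const smooth_closure.add)

definition hp_deriv_closed :: "'m::finite itself \<Rightarrow> (real \<times> real \<Rightarrow> real) \<Rightarrow> bool" where
  "hp_deriv_closed T F \<longleftrightarrow> (\<forall>p\<in>halfplane. F differentiable (at p within halfplane))
    \<and> (\<forall>v. smooth_closure T (hp_deriv F v))"

lemma hp_deriv_closedI:
  assumes deriv: "\<And>p. p \<in> halfplane \<Longrightarrow> (F has_derivative D p) (at p within halfplane)"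
    and closure: "\<And>v. smooth_closure T (\<lambda>p. D p v)"
  shows "hp_deriv_closed T F"
  unfolding hp_deriv_closed_def
proof (intro conjI ballI allI)
  show "F differentiable (at p within halfplane)" if "p \<in> halfplane" for p
    using deriv[OF that] by (auto simp: differentiable_def)
  show "smooth_closure T (hp_deriv F v)" for v
    by (rule smooth_closure.cong[OF closure]) (simp add: hp_deriv_eq[OF _ deriv])
qed

lemma hp_deriv_closedD:
  assumes "hp_deriv_closed T F"
  shows "p \<in> halfplane \<Longrightarrow> F differentiable (at p within halfplane)"
    and "smooth_closure T (hp_deriv F v)"
  using assms unfolding hp_deriv_closed_def by blast+

lemma hp_deriv_closed_smooth_on:
  assumes "smooth_on halfplane F"
  shows "hp_deriv_closed T F"
proof -
  have diff: "\<forall>p\<in>halfplane. F differentiable (at p within halfplane)"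
    using smooth_onD(1)[OF assms] .
  have "smooth_closure T (hp_deriv F e)" if "e \<in> {(1, 0), (0, 1)}" for e
    using smooth_onD(2)[OF assms] that
    by (auto intro!: smooth_closure.base simp: hp_deriv_def[abs_def] Basis_prod_def)
  then have "smooth_closure T (\<lambda>p. fst v * hp_deriv F (1, 0) p + snd v * hp_deriv F (0, 1) p)" for v
    by (intro smooth_closure.add smooth_closure.mult smooth_closure_const) auto
  then have "smooth_closure T (hp_deriv F v)" for v
    by (rule smooth_closure.cong) (use diff in \<open>simp add: hp_deriv_linear[of F _ v]\<close>)
  with diff show ?thesis
    by (simp add: hp_deriv_closed_def)
qed

lemma hp_deriv_closed_affine: "hp_deriv_closed T (\<lambda>p. a * fst p + b * snd p + d)"
  by (rule hp_deriv_closedI[where D="\<lambda>p v. a * fst v + b * snd v"])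
    (auto intro!: derivative_eq_intros smooth_closure_const)

lemma hp_deriv_closed_add:
  assumes "hp_deriv_closed T F" "hp_deriv_closed T G"
  shows "hp_deriv_closed T (\<lambda>p. F p + G p)"
  using assms
  by (intro hp_deriv_closedI[where D="\<lambda>p v. hp_deriv F v p + hp_deriv G v p"]
      has_derivative_add has_derivative_hp_deriv smooth_closure.add)
    (auto dest: hp_deriv_closedD)

lemma hp_deriv_closed_mult:
  assumes "smooth_closure T F" "smooth_closure T G" "hp_deriv_closed T F" "hp_deriv_closed T G"
  shows "hp_deriv_closed T (\<lambda>p. F p * G p)"
  using assms
  by (intro hp_deriv_closedI[where D="\<lambda>p v. F p * hp_deriv G v p + hp_deriv F v p * G p"]
      has_derivative_mult has_derivative_hp_deriv smooth_closure.add smooth_closure.mult)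
    (auto dest: hp_deriv_closedD)

lemma hp_deriv_closed_compose:
  assumes "smooth_on UNIV h" "smooth_closure T F" "hp_deriv_closed T F"
  shows "hp_deriv_closed T (\<lambda>p. h (F p))"
  using assms
  by (intro hp_deriv_closedI[where D="\<lambda>p v. hp_deriv F v p * deriv h (F p)"]
      has_derivative_compose_smooth[OF assms(1)] has_derivative_hp_deriv smooth_closure.mult
      smooth_closure.compose[OF smooth_on_UNIV_deriv])
    (auto dest: hp_deriv_closedD)

lemma hp_deriv_closed_compose_vec:
  fixes H :: "real^'m::finite \<Rightarrow> real" and T :: "'m itself"
  assumes H: "smooth_on UNIV H" and "\<And>k. smooth_closure T (G k)"
    and G: "\<And>k. hp_deriv_closed T (G k)"
  shows "hp_deriv_closed T (\<lambda>p. H (\<chi> k. G k p))"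
proof (rule hp_deriv_closedI)
  show "((\<lambda>p. H (\<chi> k. G k p)) has_derivative
      (\<lambda>v. frechet_derivative H (at (\<chi> k. G k p)) (\<chi> k. hp_deriv (G k) v p)))
    (at p within halfplane)" if "p \<in> halfplane" for p
    using that by (intro has_derivative_compose_smooth_vec[OF H] has_derivative_hp_deriv
        hp_deriv_closedD(1)[OF G])
  have "frechet_derivative H (at (\<chi> k. G k p)) (\<chi> k. hp_deriv (G k) v p)
      = (\<Sum>k\<in>UNIV. hp_deriv (G k) v p * partial_deriv H k (\<chi> j. G j p))" for p v
    using smooth_onD(1)[OF H] by (simp add: frechet_derivative_eq_sum_partial_deriv)
  moreover have "smooth_closure T
      (\<lambda>p. \<Sum>k\<in>UNIV. hp_deriv (G k) v p * partial_deriv H k (\<chi> j. G j p))" for v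
    using assms
    by (intro smooth_closure_sum smooth_closure.mult hp_deriv_closedD(2)[OF G]
        smooth_closure.compose_vec[OF smooth_on_UNIV_partial_deriv])
  ultimately show "smooth_closure T
      (\<lambda>p. frechet_derivative H (at (\<chi> k. G k p)) (\<chi> k. hp_deriv (G k) v p))" for v
    by simp
qed

lemma hp_deriv_closed_cong:
  assumes "hp_deriv_closed T F" "\<And>p. p \<in> halfplane \<Longrightarrow> F p = G p"
  shows "hp_deriv_closed T G"
proof (rule hp_deriv_closedI[where D="\<lambda>p v. hp_deriv F v p"])
  show "(G has_derivative (\<lambda>v. hp_deriv F v p)) (at p within halfplane)" if "p \<in> halfplane" for p
    using assms that
    by (intro has_derivative_transform_within[OF has_derivative_hp_deriv _ that, of _ 1])
      (auto dest: hp_deriv_closedD)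
  show "smooth_closure T (hp_deriv F v)" for v
    using assms(1) by (rule hp_deriv_closedD)
qed

lemma smooth_closure_imp_hp_deriv_closed: "smooth_closure T F \<Longrightarrow> hp_deriv_closed T F"
proof (induction rule: smooth_closure.induct)
  case (compose h F)
  then show ?case by (rule hp_deriv_closed_compose)
next
  case (compose_vec H G)
  then show ?case by (intro hp_deriv_closed_compose_vec)
qed (auto intro: hp_deriv_closed_smooth_on hp_deriv_closed_affine hp_deriv_closed_add
    hp_deriv_closed_mult hp_deriv_closed_cong)

lemma smooth_closure_imp_smooth_on: "smooth_closure T F \<Longrightarrow> smooth_on halfplane F"
proof (coinduction arbitrary: F rule: smooth_on.coinduct)
  case (smooth_on F)
  then show ?case
    using smooth_closure_imp_hp_deriv_closed[OF smooth_on]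
    by (auto simp: hp_deriv_closed_def hp_deriv_def[abs_def])
qed

lemma smooth_on_halfplane_hp_deriv:
  "smooth_on halfplane F \<Longrightarrow> smooth_on halfplane (hp_deriv F v)"
  using hp_deriv_closed_smooth_on[where T="TYPE(unit)"]
  by (blast intro: smooth_closure_imp_smooth_on hp_deriv_closedD(2))

section \<open>Taylor expansion along lines\<close>

lemma has_real_derivative_along_line:
  assumes "smooth_on halfplane F" "0 \<le> s"
  shows "((\<lambda>s. F (s, y + c * s)) has_real_derivative hp_deriv F (1, c) (s, y + c * s))
    (at s within {0..})"
proof -
  have line: "((\<lambda>s. (s, y + c * s)) has_derivative (\<lambda>h. (h, c * h))) (at s within {0..})"
    by (auto intro!: derivative_eq_intros)
  have "((\<lambda>s. F (s, y + c * s)) has_derivative (\<lambda>h. hp_deriv F (h, c * h) (s, y + c * s)))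
      (at s within {0..})"
    by (rule has_derivative_in_compose2[of halfplane F "\<lambda>p v. hp_deriv F v p", OF _ _ _ line])
      (use assms in \<open>auto intro!: has_derivative_hp_deriv smooth_on_differentiable simp: mem_halfplane\<close>)
  moreover have "F differentiable (at (s, y + c * s) within halfplane)"
    using assms by (intro smooth_on_differentiable) (auto simp: mem_halfplane)
  then have "hp_deriv F (h, c * h) (s, y + c * s) = hp_deriv F (1, c) (s, y + c * s) * h" for h
    using hp_deriv_linear[of F _ "(h, c * h)"] hp_deriv_linear[of F _ "(1, c)"]
    by (simp add: algebra_simps)
  ultimately have "((\<lambda>s. F (s, y + c * s)) has_derivative
      (\<lambda>h. hp_deriv F (1, c) (s, y + c * s) * h)) (at s within {0..})"
    by simp
  then show ?thesis
    by (simp add: has_field_derivative_def)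
qed

lemma smooth_on_halfplane_taylor_along_line:
  assumes "smooth_on halfplane F"
  obtains M where "\<And>y s. y \<in> {a..b} \<Longrightarrow> s \<in> {0..1} \<Longrightarrow>
    \<bar>F (s, y + c * s) - (\<Sum>i\<le>n. ((\<lambda>G. hp_deriv G (1, c)) ^^ i) F (0, y) * s ^ i / fact i)\<bar>
      \<le> M * s ^ Suc n"
proof -
  define D where "D i = ((\<lambda>G. hp_deriv G (1, c)) ^^ i) F" for i
  have smooth: "smooth_on halfplane (D i)" for i
    by (induction i) (simp_all add: D_def assms smooth_on_halfplane_hp_deriv)
  let ?g = "\<lambda>q. D (Suc n) (fst q, snd q + c * fst q)"
  have "continuous_on ({0..1} \<times> {a..b}) ?g"
    by (rule continuous_on_compose2[OF smooth_on_imp_continuous_on[OF smooth]])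
      (intro continuous_intros, auto simp: mem_halfplane)
  then have "bounded (?g ` ({0..1} \<times> {a..b}))"
    by (intro compact_imp_bounded compact_continuous_image compact_Times) auto
  then obtain B where B: "\<And>s y. s \<in> {0..1} \<Longrightarrow> y \<in> {a..b} \<Longrightarrow> \<bar>D (Suc n) (s, y + c * s)\<bar> \<le> B"
    unfolding bounded_iff by force
  show thesis
  proof (rule that[of "B / fact n"])
    fix y s :: real
    assume y: "y \<in> {a..b}" and s: "s \<in> {0..1}"
    have "norm (D 0 (s, y + c * s) - (\<Sum>i\<le>n. D i (0, y + c * 0) * (s - 0) ^ i / fact i))
        \<le> B * norm (s - 0) ^ Suc n / fact n"
    proof (rule field_Taylor[where f="\<lambda>i s. D i (s, y + c * s)" and S="{0..1}"])
      show "((\<lambda>s. D i (s, y + c * s)) has_real_derivative D (Suc i) (u, y + c * u)) (at u within {0..1})"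
        if "u \<in> {0..1}" for i u
        using has_real_derivative_along_line[OF smooth, of u i y c] that
        by (auto simp: D_def intro: DERIV_subset)
    qed (use B y s in auto)
    then show "\<bar>F (s, y + c * s) - (\<Sum>i\<le>n. ((\<lambda>G. hp_deriv G (1, c)) ^^ i) F (0, y) * s ^ i / fact i)\<bar>
      \<le> B / fact n * s ^ Suc n"
      using s by (simp add: D_def)
  qed
qed

lemma smooth_on_halfplane_taylor_along_line_bigo:
  assumes "smooth_on halfplane F" "0 \<le> \<beta>"
  shows "(\<lambda>t. F (\<beta> * t, x - e * t + c * (\<beta> * t))
      - (\<Sum>i\<le>n. ((\<lambda>G. hp_deriv G (1, c)) ^^ i) F (0, x - e * t) * (\<beta> * t) ^ i / fact i))
    \<in> O[at_right 0](\<lambda>t. t ^ Suc n)"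
proof -
  obtain M where M: "\<And>y s. y \<in> {x - \<bar>e\<bar>..x + \<bar>e\<bar>} \<Longrightarrow> s \<in> {0..1} \<Longrightarrow>
      \<bar>F (s, y + c * s) - (\<Sum>i\<le>n. ((\<lambda>G. hp_deriv G (1, c)) ^^ i) F (0, y) * s ^ i / fact i)\<bar>
        \<le> M * s ^ Suc n"
    using smooth_on_halfplane_taylor_along_line[OF assms(1)] by blast
  show ?thesis
  proof (intro bigoI eventually_at_rightI)
    fix t :: real
    assume t: "t \<in> {0<..<1 / (\<beta> + 1)}"
    then have "t * (\<beta> + 1) < 1"
      using assms(2) by (simp add: field_simps)
    moreover have "0 \<le> \<beta> * t"
      using t assms(2) by simp
    ultimately have "t \<le> 1" "\<beta> * t \<in> {0..1}"
      using t by (auto simp: algebra_simps)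
    moreover have "\<bar>e * t\<bar> \<le> \<bar>e\<bar>"
      using \<open>t \<le> 1\<close> t by (auto simp: abs_mult intro: mult_left_le)
    ultimately show "norm (F (\<beta> * t, x - e * t + c * (\<beta> * t))
        - (\<Sum>i\<le>n. ((\<lambda>G. hp_deriv G (1, c)) ^^ i) F (0, x - e * t) * (\<beta> * t) ^ i / fact i))
      \<le> M * \<beta> ^ Suc n * norm (t ^ Suc n)"
      using M[of "x - e * t" "\<beta> * t"] t by (auto simp: power_mult_distrib mult_ac abs_le_iff)
  qed (use assms(2) in simp)
qed

section \<open>Expansions of the solution and of the predictor\<close>

definition char_second_deriv ::
  "('m::finite \<Rightarrow> real) \<Rightarrow> ('m \<Rightarrow> real^'m \<Rightarrow> real) \<Rightarrow> ('m \<Rightarrow> real \<Rightarrow> real) \<Rightarrow> 'm \<Rightarrow> real \<Rightarrow> real"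
  where "char_second_deriv lam S Q0 l y =
    frechet_derivative (S l) (at (\<chi> j. Q0 j y))
      (\<chi> k. S k (\<chi> j. Q0 j y) + (lam l - lam k) * deriv (Q0 k) y)"

definition predictor_source ::
  "('m::finite \<Rightarrow> real) \<Rightarrow> ('m \<Rightarrow> real^'m \<Rightarrow> real) \<Rightarrow> ('m \<Rightarrow> real \<Rightarrow> real) \<Rightarrow> 'm \<Rightarrow> real \<times> real \<Rightarrow> real"
  where "predictor_source lam S Q0 l p =
    S l (\<chi> k. Q0 k (snd p + (lam l - lam k) * fst p)
      + fst p * S k (\<chi> j. Q0 j (snd p + (lam l - lam k) * fst p)))"

text \<open>
  \<^const>\<open>char_second_deriv\<close> is the \<open>B\<close> above, computed with
  \<open>\<partial>\<^sub>t Q\<^sub>k = S\<^sub>k(Q) - \<lambda>\<^sub>k \<partial>\<^sub>x Q\<^sub>k\<close>; \<open>predictor_source l (\<alpha>t, x - \<lambda>\<^sub>l t)\<close> is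
  \<open>S\<^sub>l(Q\<^sup>*\<^sub>1\<^sub>l, \<dots>, Q\<^sup>*\<^sub>m\<^sub>l)\<close>.
\<close>

context
  fixes lam :: "'m::finite \<Rightarrow> real" and S :: "'m \<Rightarrow> real^'m \<Rightarrow> real"
    and Q0 :: "'m \<Rightarrow> real \<Rightarrow> real"
  assumes S_smooth: "\<And>l. smooth_on UNIV (S l)"
    and Q0_smooth: "\<And>l. smooth_on UNIV (Q0 l)"
begin

lemma smooth_on_halfplane_predictor_source: "smooth_on halfplane (predictor_source lam S Q0 l)"
proof -
  have arg: "smooth_closure TYPE('m) (\<lambda>p. snd p + (lam l - lam k) * fst p)" for k
    by (rule smooth_closure.cong[OF smooth_closure.affine[of _ "lam l - lam k" 1 0]]) simp
  have fst: "smooth_closure TYPE('m) fst"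
    by (rule smooth_closure.cong[OF smooth_closure.affine[of _ 1 0 0]]) simp
  have "smooth_closure TYPE('m) (\<lambda>p. Q0 k (snd p + (lam l - lam k) * fst p)
      + fst p * S k (\<chi> j. Q0 j (snd p + (lam l - lam k) * fst p)))" for k
    by (intro smooth_closure.add smooth_closure.mult fst smooth_closure.compose[OF Q0_smooth arg]
        smooth_closure.compose_vec[OF S_smooth])
  then have "smooth_closure TYPE('m) (predictor_source lam S Q0 l)"
    unfolding predictor_source_def[abs_def] by (rule smooth_closure.compose_vec[OF S_smooth])
  then show ?thesis
    by (rule smooth_closure_imp_smooth_on)
qed

lemma predictor_source_initial: "predictor_source lam S Q0 l (0, y) = S l (\<chi> j. Q0 j y)"
  by (simp add: predictor_source_def)

lemma predictor_source_hp_deriv_initial: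
  "hp_deriv (predictor_source lam S Q0 l) (1, 0) (0, y) = char_second_deriv lam S Q0 l y"
proof -
  define arg where "arg k p = snd p + (lam l - lam k) * fst p" for k and p :: "real \<times> real"
  have arg: "(arg k has_derivative arg k) (at p within halfplane)" for k p
    unfolding arg_def[abs_def] by (auto intro!: derivative_eq_intros)
  have "(predictor_source lam S Q0 l has_derivative (\<lambda>v. frechet_derivative (S l)
      (at (\<chi> k. Q0 k (arg k p) + fst p * S k (\<chi> j. Q0 j (arg k p))))
      (\<chi> k. arg k v * deriv (Q0 k) (arg k p)
        + (fst p * frechet_derivative (S k) (at (\<chi> j. Q0 j (arg k p)))
            (\<chi> j. arg k v * deriv (Q0 j) (arg k p))
          + fst v * S k (\<chi> j. Q0 j (arg k p))))))
    (at p within halfplane)" for p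
    unfolding predictor_source_def[abs_def] arg_def[symmetric]
    by (intro has_derivative_compose_smooth_vec[OF S_smooth] has_derivative_add has_derivative_mult
        has_derivative_compose_smooth[OF Q0_smooth] arg has_derivative_fst has_derivative_ident)
  from this[of "(0, y)"] show ?thesis
    by (simp add: hp_deriv_eq mem_halfplane char_second_deriv_def arg_def algebra_simps)
qed

lemma predictor_expansion:
  assumes "0 \<le> \<alpha>"
  shows "(\<lambda>t. S l (\<chi> k. Qstar lam S Q0 \<alpha> k l t x)
      - (S l (\<chi> j. Q0 j (x - lam l * t)) + \<alpha> * t * char_second_deriv lam S Q0 l (x - lam l * t)))
    \<in> O[at_right 0](\<lambda>t. t ^ 2)"
proof -
  have "predictor_source lam S Q0 l (\<alpha> * t, x - lam l * t + 0 * (\<alpha> * t))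
      = S l (\<chi> k. Qstar lam S Q0 \<alpha> k l t x)" for t
    by (simp add: predictor_source_def Qstar_def xi_def Let_def algebra_simps)
  then show ?thesis
    using smooth_on_halfplane_taylor_along_line_bigo[OF smooth_on_halfplane_predictor_source[of l] assms,
        where x=x and e="lam l" and c=0 and n=1]
    by (simp add: predictor_source_initial predictor_source_hp_deriv_initial numeral_2_eq_2 mult_ac)
qed

context
  fixes Q :: "'m \<Rightarrow> real \<Rightarrow> real \<Rightarrow> real"
  assumes solution: "is_smooth_solution lam S Q0 Q"
begin

lemma solution_initial: "Q k 0 y = Q0 k y"
  using solution by (simp add: is_smooth_solution_def)

lemma smooth_on_halfplane_solution: "smooth_on halfplane (\<lambda>p. Q k (fst p) (snd p))"
  using solution by (simp add: is_smooth_solution_def)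

lemma solution_hp_deriv_char:
  assumes "p \<in> halfplane"
  shows "hp_deriv (\<lambda>p. Q k (fst p) (snd p)) (1, lam k) p = S k (\<chi> j. Q j (fst p) (snd p))"
proof -
  have "hp_deriv (\<lambda>p. Q k (fst p) (snd p)) (1, 0) p + lam k * hp_deriv (\<lambda>p. Q k (fst p) (snd p)) (0, 1) p
      = S k (\<chi> j. Q j (fst p) (snd p))"
    using solution assms unfolding is_smooth_solution_def hp_deriv_def
    by (cases p) (auto simp: mem_halfplane)
  then show ?thesis
    using hp_deriv_linear[OF smooth_on_differentiable[OF smooth_on_halfplane_solution assms],
        where v="(1, lam k)"]
    by simp
qed

lemma solution_hp_deriv_space_initial:
  "hp_deriv (\<lambda>p. Q k (fst p) (snd p)) (0, 1) (0, y) = deriv (Q0 k) y"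
proof -
  let ?F = "\<lambda>p. Q k (fst p) (snd p)"
  have line: "((\<lambda>z. (0::real, z)) has_derivative (\<lambda>h. (0, h))) (at y)"
    by (auto intro!: derivative_eq_intros)
  have "((\<lambda>z. ?F (0, z)) has_derivative (\<lambda>h. hp_deriv ?F (0, h) (0, y))) (at y)"
    by (rule has_derivative_in_compose2[of halfplane ?F "\<lambda>p v. hp_deriv ?F v p", OF _ _ _ line])
      (auto intro!: has_derivative_hp_deriv smooth_on_differentiable[OF smooth_on_halfplane_solution]
        simp: mem_halfplane)
  moreover have "((\<lambda>z. ?F (0, z)) has_derivative (\<lambda>h. deriv (Q0 k) y * h)) (at y)"
    using smooth_on_UNIV_has_real_derivative[OF Q0_smooth]
    by (simp add: solution_initial has_field_derivative_def)
  ultimately have "(\<lambda>h. hp_deriv ?F (0, h) (0, y)) = (\<lambda>h. deriv (Q0 k) y * h)"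
    by (rule has_derivative_unique)
  from fun_cong[OF this, of 1] show ?thesis
    by simp
qed

lemma solution_hp_deriv_initial:
  "hp_deriv (\<lambda>p. Q k (fst p) (snd p)) (1, c) (0, y)
    = S k (\<chi> j. Q0 j y) + (c - lam k) * deriv (Q0 k) y"
proof -
  have "(0, y) \<in> halfplane"
    by (simp add: mem_halfplane)
  with smooth_on_differentiable[OF smooth_on_halfplane_solution this]
  show ?thesis
    using hp_deriv_linear[of "\<lambda>p. Q k (fst p) (snd p)" "(0, y)" "(1, c)"]
      hp_deriv_linear[of "\<lambda>p. Q k (fst p) (snd p)" "(0, y)" "(1, lam k)"]
      solution_hp_deriv_char[where p="(0, y)" and k=k] solution_hp_deriv_space_initial[of k y]
    by (simp add: solution_initial algebra_simps)
qed

lemma solution_hp_deriv2_initial: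
  "hp_deriv (hp_deriv (\<lambda>p. Q l (fst p) (snd p)) (1, lam l)) (1, lam l) (0, y)
    = char_second_deriv lam S Q0 l y"
proof -
  have y: "(0, y) \<in> halfplane"
    by (simp add: mem_halfplane)
  have "((\<lambda>p. S l (\<chi> k. Q k (fst p) (snd p))) has_derivative
      (\<lambda>v. frechet_derivative (S l) (at (\<chi> k. Q k 0 y))
        (\<chi> k. hp_deriv (\<lambda>p. Q k (fst p) (snd p)) v (0, y)))) (at (0, y) within halfplane)"
    using has_derivative_compose_smooth_vec[OF S_smooth has_derivative_hp_deriv[OF
          smooth_on_differentiable[OF smooth_on_halfplane_solution y]]]
    by simp
  then have "hp_deriv (hp_deriv (\<lambda>p. Q l (fst p) (snd p)) (1, lam l)) (1, lam l) (0, y)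
      = frechet_derivative (S l) (at (\<chi> k. Q k 0 y))
          (\<chi> k. hp_deriv (\<lambda>p. Q k (fst p) (snd p)) (1, lam l) (0, y))"
    by (rule hp_deriv_cong[OF _ y]) (simp add: solution_hp_deriv_char)
  then show ?thesis
    by (simp add: solution_hp_deriv_initial solution_initial char_second_deriv_def)
qed

lemma solution_expansion:
  "(\<lambda>t. Q l t x - (Q0 l (x - lam l * t) + t * S l (\<chi> j. Q0 j (x - lam l * t))
      + t\<^sup>2 / 2 * char_second_deriv lam S Q0 l (x - lam l * t)))
    \<in> O[at_right 0](\<lambda>t. t ^ 3)"
  using smooth_on_halfplane_taylor_along_line_bigo[OF smooth_on_halfplane_solution[of l] zero_le_one,
      where x=x and e="lam l" and c="lam l" and n=2]
  by (simp add: solution_initial solution_hp_deriv_initial solution_hp_deriv2_initial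
      numeral_3_eq_3 numeral_2_eq_2 mult_ac)

end

end

theorem theorem2:
  fixes lam :: "'m::finite \<Rightarrow> real"
    and S :: "'m \<Rightarrow> real^'m \<Rightarrow> real"
    and Q0 :: "'m \<Rightarrow> real \<Rightarrow> real"
    and Q :: "'m \<Rightarrow> real \<Rightarrow> real \<Rightarrow> real"
    and \<alpha> :: real
  assumes "\<And>l. smooth_on UNIV (S l)"
    and "\<And>l. smooth_on UNIV (Q0 l)"
    and "is_smooth_solution lam S Q0 Q"
    and "0 < \<alpha>" and "\<alpha> < 1"
  shows "\<forall>x l. (\<lambda>t. Q1 lam S Q0 \<alpha> l t x - Q l t x) \<in> O[at_right 0](\<lambda>t. t ^ 3)"
proof (intro allI)
  fix x l
  define B where "B t = char_second_deriv lam S Q0 l (x - lam l * t)" for t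
  define E1 where "E1 t = Q l t x - (Q0 l (x - lam l * t) + t * S l (\<chi> j. Q0 j (x - lam l * t))
    + t\<^sup>2 / 2 * B t)" for t
  define E2 where "E2 t = S l (\<chi> k. Qstar lam S Q0 \<alpha> k l t x)
    - (S l (\<chi> j. Q0 j (x - lam l * t)) + \<alpha> * t * B t)" for t
  have "E1 \<in> O[at_right 0](\<lambda>t. t ^ 3)"
    using solution_expansion[OF assms(1-3)] unfolding E1_def B_def .
  moreover have "(\<lambda>t. t * E2 t) \<in> O[at_right 0](\<lambda>t. t * t\<^sup>2)"
    using predictor_expansion[OF assms(1,2), of \<alpha>] assms(4)
    unfolding E2_def B_def by (intro landau_o.big.mult_left) simp
  then have "(\<lambda>t. 1 / (2 * \<alpha>) * (t * E2 t)) \<in> O[at_right 0](\<lambda>t. t ^ 3)"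
    using assms(4) by (simp add: power_numeral_reduce)
  moreover have "Q1 lam S Q0 \<alpha> l t x - Q l t x = 1 / (2 * \<alpha>) * (t * E2 t) - E1 t" for t
    using assms(4) by (simp add: Q1_def E1_def E2_def field_simps power2_eq_square)
  ultimately show "(\<lambda>t. Q1 lam S Q0 \<alpha> l t x - Q l t x) \<in> O[at_right 0](\<lambda>t. t ^ 3)"
    by (simp add: sum_in_bigo(2))
qed

end
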